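(* In the setting described in the context, with probability $1-o(1)$ (as $m\to\infty$), for all pairs $(c_1,c_2)$ of consecutive elements of $C$, there exist at most $\log m$ items $i$ with $x_i(c_1)\ne x_i(c_2)$.
   Context: Two agents $a,b$, $m$ items, unknown utilities $u^a_i,u^b_i\in[0,1]$, additive. For an allocation (partition $(\mathcal{A}_a,\mathcal{A}_b)$ of $[m]$), $\mathrm{Envy}_{a\to b}=\sum_{i\in\mathcal{A}_b}u^a_i-\sum_{i\in\mathcal{A}_a}u^a_i$, $\mathrm{Envy}_{b\to a}=\sum_{i\in\mathcal{A}_a}u^b_i-\sum_{i\in\mathcal{A}_b}u^b_i$, $\mathrm{Envy}=\max$ of the two; assume $\min_{\mathcal{A}}\mathrm{Envy}(\mathcal{A})\le-\Delta$, with $\Delta=\Delta(m)$, $\Delta\ge m^{1/4}\log^2m$, $\Delta=o(m/\log m)$. Noise variance is $\sigma^2=1$ and $q=m\lceil15\frac{m^{3/2}}{\Delta^2}\log m+\log^2m\rceil$. Each item $i$ is queried $q/m$ times, each query returning independent $y^a\sim N(u^a_i,1)$, $y^b\sim N(u^b_i,1)$, and $v^\nu_i$ is the average of agent $\nu$'s observations for item $i$ (so $v^\nu_i\sim N(u^\nu_i,m/q)$, all independent). For $c>0$, $x_i(c)=1$ if $cv^a_i>v^b_i$ and $x_i(c)=-1$ otherwise. $C=\{k/m^3:k=1,2,\dots,m^6\}$, and consecutive elements are $k/m^3,(k+1)/m^3$. $\log$ is natural. *)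

theory Defs
  imports "HOL-Probability.Probability" "HOL-Library.Landau_Symbols"
begin

text \<open>Items are 0..m-1.  An allocation is the set A of items given to agent a;
  agent b receives the complement within the items.\<close>

definition envy_ab :: "nat \<Rightarrow> (nat \<Rightarrow> real) \<Rightarrow> nat set \<Rightarrow> real" where
  "envy_ab m ua A = (\<Sum>i\<in>{..<m} - A. ua i) - (\<Sum>i\<in>A. ua i)"

definition envy_ba :: "nat \<Rightarrow> (nat \<Rightarrow> real) \<Rightarrow> nat set \<Rightarrow> real" where
  "envy_ba m ub A = (\<Sum>i\<in>A. ub i) - (\<Sum>i\<in>{..<m} - A. ub i)"

definition envy :: "nat \<Rightarrow> (nat \<Rightarrow> real) \<Rightarrow> (nat \<Rightarrow> real) \<Rightarrow> nat set \<Rightarrow> real" where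
  "envy m ua ub A = max (envy_ab m ua A) (envy_ba m ub A)"

definition queries_per_item :: "nat \<Rightarrow> real \<Rightarrow> nat" where
  "queries_per_item m D =
     nat \<lceil>15 * real m powr (3/2) / D\<^sup>2 * ln (real m) + (ln (real m))\<^sup>2\<rceil>"

definition num_queries :: "nat \<Rightarrow> real \<Rightarrow> nat" where
  "num_queries m D = m * queries_per_item m D"

text \<open>Distribution of the averaged observations: for each item i < m, the pair
  (v^a_i, v^b_i) with v^a_i ~ N(u^a_i, m/q), v^b_i ~ N(u^b_i, m/q), all independent.
  (normal_density takes the standard deviation.)\<close>

definition avg_obs :: "nat \<Rightarrow> real \<Rightarrow> (nat \<Rightarrow> real) \<Rightarrow> (nat \<Rightarrow> real) \<Rightarrow> (nat \<Rightarrow> real \<times> real) measure" where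
  "avg_obs m D ua ub =
     (let s = sqrt (real m / real (num_queries m D)) in
      PiM {..<m} (\<lambda>i. density lborel (normal_density (ua i) s)
                     \<Otimes>\<^sub>M density lborel (normal_density (ub i) s)))"

definition xval :: "real \<Rightarrow> real \<times> real \<Rightarrow> int" where
  "xval c v = (if c * fst v > snd v then 1 else -1)"

text \<open>The event: for all consecutive pairs (k/m^3, (k+1)/m^3) of C = {k/m^3 : 1 \<le> k \<le> m^6},
  at most log m items change their x-value.\<close>

definition few_flips :: "nat \<Rightarrow> (nat \<Rightarrow> real \<times> real) \<Rightarrow> bool" where
  "few_flips m \<omega> =
     (\<forall>k::nat. 1 \<le> k \<and> k + 1 \<le> m ^ 6 \<longrightarrow>
        real (card {i\<in>{..<m}. xval (real k / real m ^ 3) (\<omega> i)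
                               \<noteq> xval (real (k + 1) / real m ^ 3) (\<omega> i)}) \<le> ln (real m))"

end

theory Submission
  imports Defs
begin

text \<open>Between consecutive thresholds c and c + m^-3 the label x_i flips only if the ratio
  v^b_i / v^a_i lies in [c, c + m^-3]; since ln m \<ge> 1, a bad event therefore produces two
  distinct items whose ratios are m^-3-close. Given v^a_i = x, the ratio of item i lies in a
  fixed window of width 2\<delta> only if v^b_i lies in an interval of length 2\<delta>|x|, which has
  probability at most 2\<delta>|x|/\<sigma> because the N(\<mu>, \<sigma>) density is bounded by 1/\<sigma>. Integrating
  against E|v^a_i| \<le> |u^a_i| + \<sigma> and taking a union bound over the m^2 pairs bounds the
  failure probability by 2(1 + \<sigma>)/(\<sigma> m). The lower bound on \<Delta> gives q/m \<le> 20 m, i.e.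
  \<sigma> \<ge> (20 m)^(-1/2), so this is O(m^(-1/2)).\<close>

abbreviation normal_pair :: "real \<Rightarrow> real \<Rightarrow> real \<Rightarrow> (real \<times> real) measure" where
  "normal_pair \<mu> \<nu> \<sigma> \<equiv> density lborel (normal_density \<mu> \<sigma>) \<Otimes>\<^sub>M density lborel (normal_density \<nu> \<sigma>)"

abbreviation normal_pairs :: "'i set \<Rightarrow> ('i \<Rightarrow> real) \<Rightarrow> ('i \<Rightarrow> real) \<Rightarrow> real \<Rightarrow> ('i \<Rightarrow> real \<times> real) measure" where
  "normal_pairs I \<mu> \<nu> \<sigma> \<equiv> PiM I (\<lambda>i. normal_pair (\<mu> i) (\<nu> i) \<sigma>)"

lemma normal_density_le_inverse:
  assumes "0 < \<sigma>"
  shows "normal_density \<mu> \<sigma> x \<le> 1 / \<sigma>"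
proof -
  have "sqrt (2 * pi * \<sigma>\<^sup>2) = sqrt (2 * pi) * \<sigma>"
    using assms by (simp add: real_sqrt_mult)
  moreover have "1 \<le> sqrt (2 * pi)"
    using pi_gt3 by simp
  ultimately have "1 / sqrt (2 * pi * \<sigma>\<^sup>2) \<le> 1 / \<sigma>"
    using assms by (simp add: divide_simps)
  moreover have "normal_density \<mu> \<sigma> x \<le> 1 / sqrt (2 * pi * \<sigma>\<^sup>2)"
    unfolding normal_density_def by (intro mult_left_le) auto
  ultimately show ?thesis
    by linarith
qed

lemma emeasure_normal_atLeastAtMost_le:
  assumes "0 < \<sigma>" "a \<le> b"
  shows "emeasure (density lborel (normal_density \<mu> \<sigma>)) {a..b} \<le> ennreal ((b - a) / \<sigma>)"
proof -
  have "emeasure (density lborel (normal_density \<mu> \<sigma>)) {a..b}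
      = (\<integral>\<^sup>+x. ennreal (normal_density \<mu> \<sigma> x) * indicator {a..b} x \<partial>lborel)"
    by (simp add: emeasure_density)
  also have "\<dots> \<le> (\<integral>\<^sup>+x. ennreal (1 / \<sigma>) * indicator {a..b} x \<partial>lborel)"
    using assms(1)
    by (intro nn_integral_mono) (auto simp: indicator_def normal_density_le_inverse intro!: ennreal_leI)
  also have "\<dots> = ennreal ((b - a) / \<sigma>)"
    using assms by (simp add: nn_integral_cmult_indicator ennreal_mult'[symmetric] mult.commute)
  finally show ?thesis .
qed

lemma nn_integral_abs_normal_le:
  assumes "0 < \<sigma>"
  shows "(\<integral>\<^sup>+x. ennreal \<bar>x\<bar> \<partial>density lborel (normal_density \<mu> \<sigma>)) \<le> ennreal (\<bar>\<mu>\<bar> + \<sigma>)"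
proof -
  let ?f = "\<lambda>x. normal_density \<mu> \<sigma> x * \<bar>x - \<mu>\<bar> + \<bar>\<mu>\<bar> * normal_density \<mu> \<sigma> x"
  have "(\<integral>\<^sup>+x. ennreal \<bar>x\<bar> \<partial>density lborel (normal_density \<mu> \<sigma>))
      = (\<integral>\<^sup>+x. ennreal (normal_density \<mu> \<sigma> x * \<bar>x\<bar>) \<partial>lborel)"
    by (subst nn_integral_density) (auto simp: ennreal_mult')
  also have "\<dots> \<le> (\<integral>\<^sup>+x. ennreal (?f x) \<partial>lborel)"
  proof (intro nn_integral_mono ennreal_leI)
    fix x
    have "normal_density \<mu> \<sigma> x * \<bar>x\<bar> \<le> normal_density \<mu> \<sigma> x * (\<bar>x - \<mu>\<bar> + \<bar>\<mu>\<bar>)"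
      by (intro mult_left_mono) auto
    then show "normal_density \<mu> \<sigma> x * \<bar>x\<bar> \<le> ?f x"
      by (simp add: algebra_simps)
  qed
  also have "\<dots> = ennreal (\<sigma> * sqrt (2 / pi) + \<bar>\<mu>\<bar>)"
  proof -
    have "integrable lborel (\<lambda>x. normal_density \<mu> \<sigma> x * \<bar>x - \<mu>\<bar>)"
      using integrable_normal_moment_abs[where \<mu> = \<mu> and k = 1, OF assms] by simp
    moreover have "(\<integral>x. normal_density \<mu> \<sigma> x * \<bar>x - \<mu>\<bar> \<partial>lborel) = \<sigma> * sqrt (2 / pi)"
      using integral_normal_moment_abs_odd[where \<mu> = \<mu> and k = 0, OF assms] by simp
    ultimately show ?thesis
      using assms by (subst nn_integral_eq_integral) auto
  qed
  also have "\<dots> \<le> ennreal (\<bar>\<mu>\<bar> + \<sigma>)"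
  proof -
    have "sqrt (2 / pi) \<le> 1"
      using pi_gt3 by simp
    then show ?thesis
      using assms by (intro ennreal_leI) (simp add: mult_left_le)
  qed
  finally show ?thesis .
qed

lemma emeasure_ratio_window_le:
  assumes \<sigma>: "0 < \<sigma>" and \<delta>: "0 \<le> \<delta>"
  shows "emeasure (normal_pair \<mu> \<nu> \<sigma>)
      {p \<in> space (normal_pair \<mu> \<nu> \<sigma>). fst p \<noteq> 0 \<and> \<bar>snd p / fst p - t\<bar> \<le> \<delta>}
    \<le> ennreal (2 * \<delta> / \<sigma> * (\<bar>\<mu>\<bar> + \<sigma>))"
proof -
  let ?X = "density lborel (normal_density \<mu> \<sigma>)" and ?Y = "density lborel (normal_density \<nu> \<sigma>)"
  define W where "W = {p \<in> space (?X \<Otimes>\<^sub>M ?Y). fst p \<noteq> 0 \<and> \<bar>snd p / fst p - t\<bar> \<le> \<delta>}"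
  interpret Y: prob_space ?Y
    by (rule prob_space_normal_density[OF \<sigma>])
  have slice: "emeasure ?Y (Pair x -` W) \<le> ennreal (2 * \<delta> / \<sigma> * \<bar>x\<bar>)" for x
  proof (cases "x = 0")
    case True
    then show ?thesis
      by (simp add: W_def)
  next
    case False
    have "Pair x -` W \<subseteq> {x * t - \<bar>x\<bar> * \<delta> .. x * t + \<bar>x\<bar> * \<delta>}"
    proof
      fix y
      assume "y \<in> Pair x -` W"
      then have "\<bar>x\<bar> * \<bar>y / x - t\<bar> \<le> \<bar>x\<bar> * \<delta>"
        by (simp add: W_def mult_left_mono)
      moreover have "\<bar>x\<bar> * \<bar>y / x - t\<bar> = \<bar>y - x * t\<bar>"
        using False by (simp add: abs_mult[symmetric] algebra_simps)
      ultimately show "y \<in> {x * t - \<bar>x\<bar> * \<delta> .. x * t + \<bar>x\<bar> * \<delta>}"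
        by auto
    qed
    then have "emeasure ?Y (Pair x -` W) \<le> emeasure ?Y {x * t - \<bar>x\<bar> * \<delta> .. x * t + \<bar>x\<bar> * \<delta>}"
      by (intro emeasure_mono) auto
    also have "\<dots> \<le> ennreal (((x * t + \<bar>x\<bar> * \<delta>) - (x * t - \<bar>x\<bar> * \<delta>)) / \<sigma>)"
      using \<sigma> \<delta> by (intro emeasure_normal_atLeastAtMost_le) auto
    finally show ?thesis
      by (simp add: field_simps)
  qed
  have "W \<in> sets (?X \<Otimes>\<^sub>M ?Y)"
    unfolding W_def by measurable
  then have "emeasure (?X \<Otimes>\<^sub>M ?Y) W = (\<integral>\<^sup>+x. emeasure ?Y (Pair x -` W) \<partial>?X)"
    by (rule Y.emeasure_pair_measure_alt)
  also have "\<dots> \<le> (\<integral>\<^sup>+x. ennreal (2 * \<delta> / \<sigma>) * ennreal \<bar>x\<bar> \<partial>?X)"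
    using slice \<sigma> \<delta> by (intro nn_integral_mono) (simp add: ennreal_mult'[symmetric])
  also have "\<dots> = ennreal (2 * \<delta> / \<sigma>) * (\<integral>\<^sup>+x. ennreal \<bar>x\<bar> \<partial>?X)"
    by (rule nn_integral_cmult) simp
  also have "\<dots> \<le> ennreal (2 * \<delta> / \<sigma>) * ennreal (\<bar>\<mu>\<bar> + \<sigma>)"
    using \<sigma> by (intro mult_left_mono nn_integral_abs_normal_le) auto
  also have "\<dots> = ennreal (2 * \<delta> / \<sigma> * (\<bar>\<mu>\<bar> + \<sigma>))"
    using \<sigma> \<delta> by (intro ennreal_mult'[symmetric]) simp
  finally show ?thesis
    by (simp add: W_def)
qed

lemma distr_PiM_pair:
  assumes M: "\<And>k. k \<in> I \<Longrightarrow> prob_space (M k)" and ij: "i \<in> I" "j \<in> I" "i \<noteq> j"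
  shows "distr (PiM I M) (M i \<Otimes>\<^sub>M M j) (\<lambda>\<omega>. (\<omega> i, \<omega> j)) = M i \<Otimes>\<^sub>M M j"
proof (rule pair_measure_eqI[symmetric])
  interpret Mi: prob_space "M i" using M ij by auto
  interpret Mj: prob_space "M j" using M ij by auto
  show "sigma_finite_measure (M i)" "sigma_finite_measure (M j)"
    by unfold_locales
  show "sets (M i \<Otimes>\<^sub>M M j) = sets (distr (PiM I M) (M i \<Otimes>\<^sub>M M j) (\<lambda>\<omega>. (\<omega> i, \<omega> j)))"
    by simp
  fix A B
  assume A: "A \<in> sets (M i)" and B: "B \<in> sets (M j)"
  define F where "F = (\<lambda>k. if k = i then A else B)"
  have "(\<lambda>\<omega>. (\<omega> i, \<omega> j)) \<in> measurable (PiM I M) (M i \<Otimes>\<^sub>M M j)"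
    using ij by measurable
  moreover have "(\<lambda>\<omega>. (\<omega> i, \<omega> j)) -` (A \<times> B) \<inter> space (PiM I M) = prod_emb I M {i, j} (Pi\<^sub>E {i, j} F)"
    using ij by (auto simp: prod_emb_def space_PiM F_def PiE_iff)
  ultimately have "emeasure (distr (PiM I M) (M i \<Otimes>\<^sub>M M j) (\<lambda>\<omega>. (\<omega> i, \<omega> j))) (A \<times> B)
      = emeasure (PiM I M) (prod_emb I M {i, j} (Pi\<^sub>E {i, j} F))"
    using A B by (simp add: emeasure_distr)
  also have "\<dots> = (\<Prod>k\<in>{i, j}. emeasure (M k) (F k))"
    using ij A B by (intro emeasure_PiM_emb M) (auto simp: F_def)
  also have "\<dots> = emeasure (M i) A * emeasure (M j) B"
    using ij by (simp add: F_def)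
  finally show "emeasure (M i) A * emeasure (M j) B =
      emeasure (distr (PiM I M) (M i \<Otimes>\<^sub>M M j) (\<lambda>\<omega>. (\<omega> i, \<omega> j))) (A \<times> B)"
    by simp
qed

definition ratios_close :: "real \<Rightarrow> real \<times> real \<Rightarrow> real \<times> real \<Rightarrow> bool" where
  "ratios_close \<delta> p q \<longleftrightarrow> fst p \<noteq> 0 \<and> fst q \<noteq> 0 \<and> \<bar>snd p / fst p - snd q / fst q\<bar> \<le> \<delta>"

lemma prob_ratios_close_le:
  assumes \<sigma>: "0 < \<sigma>" and \<delta>: "0 \<le> \<delta>" and ij: "i \<in> I" "j \<in> I" "i \<noteq> j"
  shows "measure (normal_pairs I \<mu> \<nu> \<sigma>) {\<omega> \<in> space (normal_pairs I \<mu> \<nu> \<sigma>). ratios_close \<delta> (\<omega> i) (\<omega> j)}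
    \<le> 2 * \<delta> / \<sigma> * (\<bar>\<mu> i\<bar> + \<sigma>)"
proof -
  let ?N = "normal_pairs I \<mu> \<nu> \<sigma>"
  let ?M = "\<lambda>k. normal_pair (\<mu> k) (\<nu> k) \<sigma>"
  have M: "prob_space (?M k)" for k
    by (intro prob_space_pair prob_space_normal_density \<sigma>)
  interpret N: prob_space ?N
    by (intro prob_space_PiM M)
  interpret Mi: prob_space "?M i"
    by (rule M)
  interpret Mj: prob_space "?M j"
    by (rule M)
  define C where "C = {qp \<in> space (?M j \<Otimes>\<^sub>M ?M i). ratios_close \<delta> (snd qp) (fst qp)}"
  have C: "C \<in> sets (?M j \<Otimes>\<^sub>M ?M i)"
    unfolding C_def ratios_close_def by measurable
  have "{\<omega> \<in> space ?N. ratios_close \<delta> (\<omega> i) (\<omega> j)} = (\<lambda>\<omega>. (\<omega> j, \<omega> i)) -` C \<inter> space ?N"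
    using ij by (auto simp: C_def space_PiM space_pair_measure)
  moreover have "(\<lambda>\<omega>. (\<omega> j, \<omega> i)) \<in> measurable ?N (?M j \<Otimes>\<^sub>M ?M i)"
    using ij by measurable
  ultimately have "emeasure ?N {\<omega> \<in> space ?N. ratios_close \<delta> (\<omega> i) (\<omega> j)}
      = emeasure (distr ?N (?M j \<Otimes>\<^sub>M ?M i) (\<lambda>\<omega>. (\<omega> j, \<omega> i))) C"
    using C by (simp add: emeasure_distr)
  also have "\<dots> = emeasure (?M j \<Otimes>\<^sub>M ?M i) C"
    using ij M by (subst distr_PiM_pair) auto
  also have "\<dots> = (\<integral>\<^sup>+q. emeasure (?M i) (Pair q -` C) \<partial>?M j)"
    by (rule Mi.emeasure_pair_measure_alt[OF C])
  also have "\<dots> \<le> (\<integral>\<^sup>+q. ennreal (2 * \<delta> / \<sigma> * (\<bar>\<mu> i\<bar> + \<sigma>)) \<partial>?M j)"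
  proof (intro nn_integral_mono)
    fix q :: "real \<times> real"
    have "Pair q -` C \<subseteq> {p \<in> space (?M i). fst p \<noteq> 0 \<and> \<bar>snd p / fst p - snd q / fst q\<bar> \<le> \<delta>}"
      by (auto simp: C_def ratios_close_def space_pair_measure)
    then have "emeasure (?M i) (Pair q -` C)
        \<le> emeasure (?M i) {p \<in> space (?M i). fst p \<noteq> 0 \<and> \<bar>snd p / fst p - snd q / fst q\<bar> \<le> \<delta>}"
      by (rule emeasure_mono) measurable
    also have "\<dots> \<le> ennreal (2 * \<delta> / \<sigma> * (\<bar>\<mu> i\<bar> + \<sigma>))"
      by (intro emeasure_ratio_window_le \<sigma> \<delta>)
    finally show "emeasure (?M i) (Pair q -` C) \<le> ennreal (2 * \<delta> / \<sigma> * (\<bar>\<mu> i\<bar> + \<sigma>))" .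
  qed
  also have "\<dots> = ennreal (2 * \<delta> / \<sigma> * (\<bar>\<mu> i\<bar> + \<sigma>))"
    by (simp add: Mj.emeasure_space_1)
  finally show ?thesis
    using \<sigma> \<delta> by (simp add: N.emeasure_eq_measure)
qed

lemma xval_ne_imp_ratio_between:
  assumes "c\<^sub>1 < c\<^sub>2" "xval c\<^sub>1 v \<noteq> xval c\<^sub>2 v"
  shows "fst v \<noteq> 0 \<and> c\<^sub>1 \<le> snd v / fst v \<and> snd v / fst v \<le> c\<^sub>2"
proof -
  obtain a b where v: "v = (a, b)"
    by (cases v)
  have ne: "(b < c\<^sub>1 * a) \<noteq> (b < c\<^sub>2 * a)"
    using assms(2) by (auto simp: xval_def v split: if_splits)
  show ?thesis
  proof (cases a "0::real" rule: linorder_cases)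
    case less
    then have "c\<^sub>2 * a < c\<^sub>1 * a"
      using assms(1) by simp
    then have "c\<^sub>2 * a \<le> b" "b < c\<^sub>1 * a"
      using ne by auto
    then show ?thesis
      using less by (simp add: v neg_divide_le_eq neg_le_divide_eq)
  next
    case equal
    then show ?thesis
      using ne by (simp add: v)
  next
    case greater
    then have "c\<^sub>1 * a < c\<^sub>2 * a"
      using assms(1) by simp
    then have "c\<^sub>1 * a \<le> b" "b < c\<^sub>2 * a"
      using ne by auto
    then show ?thesis
      using greater by (simp add: v pos_le_divide_eq pos_divide_le_eq)
  qed
qed

lemma xval_flips_imp_ratios_close:
  assumes "c\<^sub>1 < c\<^sub>2" "xval c\<^sub>1 p \<noteq> xval c\<^sub>2 p" "xval c\<^sub>1 q \<noteq> xval c\<^sub>2 q"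
  shows "ratios_close (c\<^sub>2 - c\<^sub>1) p q"
  using xval_ne_imp_ratio_between[OF assms(1,2)] xval_ne_imp_ratio_between[OF assms(1,3)]
  unfolding ratios_close_def by linarith

lemma ln_ge_one:
  assumes "3 \<le> m"
  shows "1 \<le> ln (real m)"
proof -
  have "exp 1 \<le> real m"
    using exp_le assms by linarith
  then show ?thesis
    using assms by (simp add: ln_ge_iff)
qed

lemma not_few_flips_imp_ratios_close:
  assumes "3 \<le> m" "\<not> few_flips m \<omega>"
  obtains i j where "i < m" "j < m" "i \<noteq> j" "ratios_close (1 / real m ^ 3) (\<omega> i) (\<omega> j)"
proof -
  obtain k :: nat where "ln (real m) < real (card {i \<in> {..<m}.
      xval (real k / real m ^ 3) (\<omega> i) \<noteq> xval (real (k + 1) / real m ^ 3) (\<omega> i)})"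
    (is "_ < real (card ?S)")
    using assms(2) unfolding few_flips_def not_all not_imp not_le by blast
  with ln_ge_one[OF assms(1)] have "\<not> card ?S \<le> Suc 0"
    by linarith
  then obtain i j where ij: "i \<in> ?S" "j \<in> ?S" "i \<noteq> j"
    by (auto simp: card_le_Suc0_iff_eq)
  have "real k / real m ^ 3 < real (k + 1) / real m ^ 3"
    using assms(1) by (simp add: divide_strict_right_mono)
  from xval_flips_imp_ratios_close[OF this] ij(1,2)
  have "ratios_close (real (k + 1) / real m ^ 3 - real k / real m ^ 3) (\<omega> i) (\<omega> j)"
    by blast
  moreover have "real (k + 1) / real m ^ 3 - real k / real m ^ 3 = 1 / real m ^ 3"
    by (simp add: diff_divide_distrib[symmetric])
  ultimately have "ratios_close (1 / real m ^ 3) (\<omega> i) (\<omega> j)"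
    by simp
  with ij show thesis
    using that by blast
qed

lemma few_flips_iff_sum:
  "few_flips m \<omega> \<longleftrightarrow> (\<forall>k::nat. 1 \<le> k \<and> k + 1 \<le> m ^ 6 \<longrightarrow>
     (\<Sum>i<m. of_bool ((real k / real m ^ 3 * fst (\<omega> i) > snd (\<omega> i))
        \<noteq> (real (k + 1) / real m ^ 3 * fst (\<omega> i) > snd (\<omega> i))) :: real) \<le> ln (real m))"
proof -
  have "{i \<in> {..<m}. xval a (\<omega> i) \<noteq> xval b (\<omega> i)}
      = {..<m} \<inter> {i. (a * fst (\<omega> i) > snd (\<omega> i)) \<noteq> (b * fst (\<omega> i) > snd (\<omega> i))}" for a b
    by (auto simp: xval_def)
  then show ?thesis
    unfolding few_flips_def by simp
qed

lemma few_flips_measurable: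
  "{\<omega> \<in> space (normal_pairs {..<m} \<mu> \<nu> \<sigma>). few_flips m \<omega>} \<in> sets (normal_pairs {..<m} \<mu> \<nu> \<sigma>)"
proof -
  have "(\<lambda>\<omega>. of_bool ((a * fst (\<omega> i) > snd (\<omega> i)) \<noteq> (b * fst (\<omega> i) > snd (\<omega> i))) :: real)
      \<in> borel_measurable (normal_pairs {..<m} \<mu> \<nu> \<sigma>)" if "i \<in> {..<m}" for a b i
    using that by measurable
  then show ?thesis
    unfolding few_flips_iff_sum by measurable
qed

lemma ln_squared_le:
  fixes x :: real
  assumes "1 \<le> x"
  shows "(ln x)\<^sup>2 \<le> 4 * x"
proof -
  have "ln x = 2 * ln (sqrt x)"
    using assms by (simp add: ln_sqrt)
  also have "\<dots> \<le> 2 * sqrt x"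
    using ln_le_minus_one[of "sqrt x"] assms by simp
  finally have "(ln x)\<^sup>2 \<le> (2 * sqrt x)\<^sup>2"
    using assms by (intro power_mono) auto
  then show ?thesis
    using assms by (simp add: power_mult_distrib)
qed

lemma sqrt_mult_ln_le_sq:
  assumes m: "3 \<le> m" and D: "real m powr (1/4) * (ln (real m))\<^sup>2 \<le> D"
  shows "sqrt (real m) * ln (real m) \<le> D\<^sup>2"
proof -
  let ?L = "ln (real m)"
  have L: "1 \<le> ?L"
    using ln_ge_one[OF m] .
  have "sqrt (real m) * ?L \<le> sqrt (real m) * ?L ^ 4"
    using L by (intro mult_left_mono) (auto simp: power_increasing[of 1 4 ?L, simplified])
  also have "\<dots> = (real m powr (1/4))\<^sup>2 * (?L\<^sup>2)\<^sup>2"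
    using m by (simp add: powr_power powr_half_sqrt[symmetric] flip: power_mult)
  also have "\<dots> = (real m powr (1/4) * ?L\<^sup>2)\<^sup>2"
    by (simp add: power_mult_distrib)
  also have "\<dots> \<le> D\<^sup>2"
    using D by (intro power_mono) auto
  finally show ?thesis .
qed

lemma queries_per_item_bounds:
  assumes m: "3 \<le> m" and D: "real m powr (1/4) * (ln (real m))\<^sup>2 \<le> D"
  shows "1 \<le> queries_per_item m D" "queries_per_item m D \<le> 20 * m"
proof -
  let ?L = "ln (real m)"
  define X where "X = 15 * real m powr (3/2) / D\<^sup>2 * ?L + ?L\<^sup>2"
  have L: "1 \<le> ?L"
    using ln_ge_one[OF m] .
  have "0 < sqrt (real m) * ?L"
    using L m by simp
  with sqrt_mult_ln_le_sq[OF assms] have D2: "0 < D\<^sup>2"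
    by linarith
  have "real m powr (3/2) = real m powr (1 + 1/2)"
    by simp
  also have "\<dots> = real m * sqrt (real m)"
    using m by (subst powr_add) (simp add: powr_half_sqrt)
  finally have "15 * real m powr (3/2) / D\<^sup>2 * ?L = 15 * real m * (sqrt (real m) * ?L) / D\<^sup>2"
    by simp
  also have "\<dots> \<le> 15 * real m"
    using sqrt_mult_ln_le_sq[OF assms] D2 by (simp add: divide_le_eq mult_left_mono)
  finally have "X \<le> 19 * real m"
    using ln_squared_le[of "real m"] m unfolding X_def by simp
  moreover have "1 \<le> X"
    using L unfolding X_def by (simp add: one_le_power add_increasing)
  moreover have "queries_per_item m D = nat \<lceil>X\<rceil>"
    unfolding queries_per_item_def X_def ..
  ultimately show "1 \<le> queries_per_item m D" "queries_per_item m D \<le> 20 * m"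
    using m by linarith+
qed

lemma prob_not_few_flips_le:
  assumes m: "3 \<le> m" and \<sigma>: "0 < \<sigma>" and \<mu>: "\<And>i. i < m \<Longrightarrow> \<bar>\<mu> i\<bar> \<le> 1"
  shows "measure (normal_pairs {..<m} \<mu> \<nu> \<sigma>) {\<omega> \<in> space (normal_pairs {..<m} \<mu> \<nu> \<sigma>). \<not> few_flips m \<omega>}
    \<le> 2 * (1 + \<sigma>) / (\<sigma> * real m)"
proof -
  let ?N = "normal_pairs {..<m} \<mu> \<nu> \<sigma>"
  define \<delta> where "\<delta> = 1 / real m ^ 3"
  define P where "P = {p \<in> {..<m} \<times> {..<m}. fst p \<noteq> snd p}"
  define E where "E p = {\<omega> \<in> space ?N. ratios_close \<delta> (\<omega> (fst p)) (\<omega> (snd p))}" for p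
  interpret N: prob_space ?N
    using \<sigma> by (intro prob_space_PiM prob_space_pair prob_space_normal_density)
  have "finite P"
    unfolding P_def by simp
  have E: "E p \<in> sets ?N" if "p \<in> P" for p
  proof -
    have "fst p \<in> {..<m}" "snd p \<in> {..<m}"
      using that by (auto simp: P_def)
    then show ?thesis
      unfolding E_def ratios_close_def by measurable
  qed
  have "{\<omega> \<in> space ?N. \<not> few_flips m \<omega>} \<subseteq> (\<Union>p\<in>P. E p)"
    by (auto simp: E_def P_def \<delta>_def elim!: not_few_flips_imp_ratios_close[OF m])
  then have "measure ?N {\<omega> \<in> space ?N. \<not> few_flips m \<omega>} \<le> measure ?N (\<Union>p\<in>P. E p)"
    using E \<open>finite P\<close> by (intro N.finite_measure_mono) auto
  also have "\<dots> \<le> (\<Sum>p\<in>P. measure ?N (E p))"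
    using E \<open>finite P\<close> by (intro measure_UNION_le) auto
  also have "\<dots> \<le> (\<Sum>p\<in>P. 2 * \<delta> / \<sigma> * (1 + \<sigma>))"
  proof (intro sum_mono)
    fix p
    assume "p \<in> P"
    then have "measure ?N (E p) \<le> 2 * \<delta> / \<sigma> * (\<bar>\<mu> (fst p)\<bar> + \<sigma>)"
      unfolding E_def P_def using \<sigma> by (intro prob_ratios_close_le) (auto simp: \<delta>_def)
    also have "\<dots> \<le> 2 * \<delta> / \<sigma> * (1 + \<sigma>)"
      using \<open>p \<in> P\<close> \<mu> \<sigma> by (intro mult_left_mono) (auto simp: P_def \<delta>_def)
    finally show "measure ?N (E p) \<le> 2 * \<delta> / \<sigma> * (1 + \<sigma>)" .
  qed
  also have "\<dots> \<le> real m ^ 2 * (2 * \<delta> / \<sigma> * (1 + \<sigma>))"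
  proof -
    have "card P \<le> card ({..<m} \<times> {..<m})"
      unfolding P_def by (intro card_mono) auto
    then have "real (card P) \<le> real m ^ 2"
      by (simp add: card_cartesian_product power2_eq_square flip: of_nat_mult)
    moreover have "0 \<le> 2 * \<delta> / \<sigma> * (1 + \<sigma>)"
      using \<sigma> by (simp add: \<delta>_def)
    ultimately show ?thesis
      unfolding sum_constant by (rule mult_right_mono)
  qed
  also have "\<dots> = 2 * (1 + \<sigma>) / (\<sigma> * real m)"
    using m \<sigma> by (simp add: \<delta>_def power2_eq_square power3_eq_cube field_simps)
  finally show ?thesis .
qed

lemma prob_few_flips_ge:
  assumes m: "3 \<le> m" and D: "real m powr (1/4) * (ln (real m))\<^sup>2 \<le> D"
    and ua: "\<And>i. i < m \<Longrightarrow> \<bar>ua i\<bar> \<le> 1"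
  shows "1 - sqrt (320 / real m)
    \<le> measure (avg_obs m D ua ub) {\<omega> \<in> space (avg_obs m D ua ub). few_flips m \<omega>}"
proof -
  define Q where "Q = real (queries_per_item m D)"
  define \<sigma> where "\<sigma> = 1 / sqrt Q"
  let ?N = "normal_pairs {..<m} ua ub \<sigma>"
  have Q: "1 \<le> Q" "Q \<le> 20 * real m"
    unfolding Q_def using queries_per_item_bounds[OF m D] by simp_all
  then have \<sigma>: "0 < \<sigma>" "\<sigma> \<le> 1"
    unfolding \<sigma>_def by simp_all
  interpret N: prob_space ?N
    using \<sigma> by (intro prob_space_PiM prob_space_pair prob_space_normal_density)
  have "avg_obs m D ua ub = ?N"
    using m by (simp add: avg_obs_def num_queries_def Q_def \<sigma>_def real_sqrt_divide Let_def)
  moreover have "{\<omega> \<in> space ?N. few_flips m \<omega>} = space ?N - {\<omega> \<in> space ?N. \<not> few_flips m \<omega>}"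
    by blast
  moreover have "measure ?N {\<omega> \<in> space ?N. \<not> few_flips m \<omega>} \<le> sqrt (320 / real m)"
  proof -
    have sqrt_Q: "1 \<le> sqrt Q"
      using Q by simp
    have "measure ?N {\<omega> \<in> space ?N. \<not> few_flips m \<omega>} \<le> 2 * (1 + \<sigma>) / (\<sigma> * real m)"
      using m \<sigma>(1) ua by (rule prob_not_few_flips_le)
    also have "\<dots> = 2 * (sqrt Q + 1) / real m"
      using m sqrt_Q by (simp add: \<sigma>_def field_simps)
    also have "\<dots> \<le> 4 * sqrt Q / real m"
      using sqrt_Q by (intro divide_right_mono) auto
    also have "\<dots> \<le> 4 * sqrt (20 * real m) / real m"
      using Q by (intro divide_right_mono mult_left_mono) auto
    also have "\<dots> = sqrt (320 / real m)"
      using m real_sqrt_mult[of 16 20] by (simp add: real_sqrt_mult real_sqrt_divide field_simps)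
    finally show ?thesis .
  qed
  ultimately show ?thesis
    using few_flips_measurable by (simp add: N.prob_compl)
qed

theorem lemma14:
  fixes \<Delta> :: "nat \<Rightarrow> real"
  assumes lower: "\<forall>m. \<Delta> m \<ge> real m powr (1/4) * (ln (real m))\<^sup>2"
    and upper: "\<Delta> \<in> o(\<lambda>m. real m / ln (real m))"
  shows "\<forall>\<epsilon>>0. \<exists>M. \<forall>m\<ge>M. \<forall>ua ub :: nat \<Rightarrow> real.
           (\<forall>i<m. 0 \<le> ua i \<and> ua i \<le> 1 \<and> 0 \<le> ub i \<and> ub i \<le> 1) \<and>
           (\<exists>A\<subseteq>{..<m}. envy m ua ub A \<le> - \<Delta> m) \<longrightarrow>
           measure (avg_obs m (\<Delta> m) ua ub)
             {\<omega> \<in> space (avg_obs m (\<Delta> m) ua ub). few_flips m \<omega>} \<ge> 1 - \<epsilon>"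
proof -
  have "1 - \<epsilon> \<le> measure (avg_obs m (\<Delta> m) ua ub) {\<omega> \<in> space (avg_obs m (\<Delta> m) ua ub). few_flips m \<omega>}"
    if \<epsilon>: "0 < \<epsilon>" and M: "max 3 (nat \<lceil>320 / \<epsilon>\<^sup>2\<rceil>) \<le> m"
      and ua: "\<forall>i<m. 0 \<le> ua i \<and> ua i \<le> 1 \<and> 0 \<le> ub i \<and> ub i \<le> 1"
    for \<epsilon> m and ua ub :: "nat \<Rightarrow> real"
  proof -
    have m: "3 \<le> m"
      using M by simp
    have "320 / \<epsilon>\<^sup>2 \<le> real m"
      using M real_nat_ceiling_ge[of "320 / \<epsilon>\<^sup>2"] by simp
    then have "sqrt (320 / real m) \<le> sqrt (\<epsilon>\<^sup>2)"
      using \<epsilon> m by (intro real_sqrt_le_mono) (simp add: field_simps)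
    moreover have "1 - sqrt (320 / real m)
        \<le> measure (avg_obs m (\<Delta> m) ua ub) {\<omega> \<in> space (avg_obs m (\<Delta> m) ua ub). few_flips m \<omega>}"
      using ua by (intro prob_few_flips_ge m lower[rule_format]) auto
    ultimately show ?thesis
      using \<epsilon> by simp
  qed
  then show ?thesis
    by blast
qed

end
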